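(* Let $N\ge 0$ be an integer and let $|\psi\rangle=\sum_{n=0}^N a_n|n\rangle$ be a normalized single-mode state ($\sum_n|a_n|^2=1$) supported on Fock states with at most $N$ photons. Then $|\psi\rangle$ has approximate coherent rank at most $N+1$. Explicitly, for a nonzero real parameter $\epsilon$, set $$c_k=\frac{e^{\epsilon^2/2}}{N+1}\sum_{n=0}^N \sqrt{n!}\,\frac{a_n}{\epsilon^n}\,e^{-2\pi i nk/(N+1)},\qquad k=0,\dots,N,$$ and $$|\tilde\psi\rangle=\frac{1}{\sqrt{\mathcal N}}\sum_{k=0}^N c_k\,\big|\epsilon e^{2\pi i k/(N+1)}\big\rangle ,$$ where $\mathcal N$ is the squared norm of $\sum_{k=0}^N c_k|\epsilon e^{2\pi i k/(N+1)}\rangle$ (so that $|\tilde\psi\rangle$ is normalized). Then $\mathcal N=1+O\!\left(\epsilon^{2(N+1)}/(N+1)!\right)$ as $\epsilon\to 0$, and the fidelity satisfies $|\langle\psi|\tilde\psi\rangle|^2=1/\mathcal N$; in particular the fidelity can be made arbitrarily close to $1$ by taking $\epsilon$ small.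
   Context: Single-mode Hilbert space with Fock (number) basis $\{|n\rangle\}_{n\ge0}$. For $\alpha\in\mathbb C$, the coherent state is $|\alpha\rangle=e^{-|\alpha|^2/2}\sum_{n=0}^\infty\frac{\alpha^n}{\sqrt{n!}}|n\rangle$ (Greek letters inside kets denote coherent states, Latin letters Fock states). A state has coherent rank $k$ if it can be written as $\sum_{i=1}^k c_i|\alpha_i^{(1)},\dots,\alpha_i^{(m)}\rangle$, a superposition of $k$ (multi-mode product) coherent states. The approximate coherent rank of a state $|\psi\rangle$ is the smallest integer $k$ such that for every $\delta>0$ there is a state $|\tilde\psi\rangle$ of coherent rank $k$ with $|\langle\psi|\tilde\psi\rangle|^2>1-\delta$. *)

theory Defs
  imports "HOL-Analysis.Analysis" "HOL-Library.Landau_Symbols"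
begin

text \<open>Single-mode states are represented by their Fock-basis amplitudes
  \<open>nat \<Rightarrow> complex\<close> (component n = amplitude of the Fock state |n>).\<close>

definition coherent :: "complex \<Rightarrow> nat \<Rightarrow> complex" where
  "coherent \<alpha> n = complex_of_real (exp (- (cmod \<alpha>)\<^sup>2 / 2)) * \<alpha> ^ n / complex_of_real (sqrt (fact n))"

definition braket :: "(nat \<Rightarrow> complex) \<Rightarrow> (nat \<Rightarrow> complex) \<Rightarrow> complex" where
  "braket \<phi> \<psi> = infsum (\<lambda>n. cnj (\<phi> n) * \<psi> n) UNIV"

definition sqnorm :: "(nat \<Rightarrow> complex) \<Rightarrow> real" where
  "sqnorm \<phi> = infsum (\<lambda>n. (cmod (\<phi> n))\<^sup>2) UNIV"

definition is_state :: "(nat \<Rightarrow> complex) \<Rightarrow> bool" where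
  "is_state \<phi> \<longleftrightarrow> (\<lambda>n. (cmod (\<phi> n))\<^sup>2) summable_on UNIV \<and> sqnorm \<phi> = 1"

definition fidelity :: "(nat \<Rightarrow> complex) \<Rightarrow> (nat \<Rightarrow> complex) \<Rightarrow> real" where
  "fidelity \<psi> \<phi> = (cmod (braket \<psi> \<phi>))\<^sup>2"

definition has_coherent_rank :: "nat \<Rightarrow> (nat \<Rightarrow> complex) \<Rightarrow> bool" where
  "has_coherent_rank k \<phi> \<longleftrightarrow>
     (\<exists>c \<alpha> :: nat \<Rightarrow> complex. \<phi> = (\<lambda>n. \<Sum>i<k. c i * coherent (\<alpha> i) n))"

definition approx_coherent_rank :: "(nat \<Rightarrow> complex) \<Rightarrow> nat" where
  "approx_coherent_rank \<psi> = (LEAST k. \<forall>\<delta>>0. \<exists>\<phi>. has_coherent_rank k \<phi> \<and> is_state \<phi> \<and>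
      fidelity \<psi> \<phi> > 1 - \<delta>)"

definition coeff_c :: "nat \<Rightarrow> (nat \<Rightarrow> complex) \<Rightarrow> real \<Rightarrow> nat \<Rightarrow> complex" where
  "coeff_c N a \<epsilon> k = complex_of_real (exp (\<epsilon>\<^sup>2 / 2) / real (N + 1)) *
     (\<Sum>n\<le>N. complex_of_real (sqrt (fact n)) * a n / complex_of_real (\<epsilon> ^ n)
        * exp (- 2 * pi * \<i> * of_nat n * of_nat k / of_nat (N + 1)))"

definition approx_unnorm :: "nat \<Rightarrow> (nat \<Rightarrow> complex) \<Rightarrow> real \<Rightarrow> nat \<Rightarrow> complex" where
  "approx_unnorm N a \<epsilon> = (\<lambda>m. \<Sum>k\<le>N. coeff_c N a \<epsilon> k *
     coherent (complex_of_real \<epsilon> * exp (2 * pi * \<i> * of_nat k / of_nat (N + 1))) m)"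

definition normN :: "nat \<Rightarrow> (nat \<Rightarrow> complex) \<Rightarrow> real \<Rightarrow> real" where
  "normN N a \<epsilon> = sqnorm (approx_unnorm N a \<epsilon>)"

definition approx_state :: "nat \<Rightarrow> (nat \<Rightarrow> complex) \<Rightarrow> real \<Rightarrow> nat \<Rightarrow> complex" where
  "approx_state N a \<epsilon> = (\<lambda>m. approx_unnorm N a \<epsilon> m / complex_of_real (sqrt (normN N a \<epsilon>)))"

end

(* With \<omega> = exp (2 pi i / (N+1)), the m-th Fock amplitude of the superposition of the
   coherent states |\<epsilon> \<omega>^k> is a discrete Fourier transform in k; since the coefficients c_k
   are themselves an inverse transform, orthogonality of the (N+1)-th roots of unity keeps only
   the residue class r = m mod (N+1), and the amplitude is \<epsilon>^(m-r) sqrt (r! / m!) a_r.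
   So the unnormalised approximation agrees with \<psi> on the Fock states 0..N, its overlap with \<psi>
   is exactly 1, and its remaining Fock components have total weight at most
   \<epsilon>^(2(N+1)) \<Sum>_{j\<ge>1} 1/j!. *)
theory Submission
  imports Defs
begin

lemma sum_root_of_unity_powers:
  fixes M :: nat and j :: int
  assumes "M > 0"
  shows "(\<Sum>k<M. exp (2 * pi * \<i> * of_nat k * of_int j / of_nat M)) = (if int M dvd j then of_nat M else 0)"
proof -
  define z where "z = exp (2 * pi * \<i> * of_int j / of_nat M)"
  have powers: "exp (2 * pi * \<i> * of_nat k * of_int j / of_nat M) = z ^ k" for k
    unfolding z_def exp_of_nat_mult[symmetric] by (simp add: mult_ac)
  have "z ^ M = exp ((2 * of_int j * pi) * \<i>)"
    unfolding z_def exp_of_nat_mult[symmetric] using assms by (simp add: field_simps)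
  also have "\<dots> = 1" by (rule exp_integer_2pi) simp
  finally have z_pow_M: "z ^ M = 1" .
  show ?thesis
  proof (cases "int M dvd j")
    case True
    then obtain t where "j = int M * t" by (auto elim: dvdE)
    then have "z = exp ((2 * of_int t * pi) * \<i>)" unfolding z_def using assms by (simp add: field_simps)
    also have "\<dots> = 1" by (rule exp_integer_2pi) simp
    finally have "z = 1" .
    then show ?thesis using True unfolding powers by simp
  next
    case False
    have "z \<noteq> 1"
    proof
      assume "z = 1"
      then obtain n :: int where "Im (2 * pi * \<i> * of_int j / of_nat M) = of_int (2 * n) * pi"
        unfolding z_def exp_eq_1 by blast
      then have "real_of_int j = of_int n * of_nat M" using assms by (simp add: field_simps)
      then have "j = n * int M" by (metis of_int_eq_iff of_int_mult of_int_of_nat_eq)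
      then show False using False by simp
    qed
    then show ?thesis using False unfolding powers by (simp add: sum_gp_strict z_pow_M)
  qed
qed

lemma int_dvd_diff_iff_eq_mod:
  fixes M m n :: nat
  assumes "n < M"
  shows "int M dvd (int m - int n) \<longleftrightarrow> n = m mod M"
proof -
  have "int M dvd (int m - int n) \<longleftrightarrow> m mod M = n mod M"
    by (metis mod_eq_dvd_iff of_nat_eq_iff zmod_int)
  then show ?thesis using assms by auto
qed

lemma sum_dft_inverse_aliasing:
  fixes B :: "nat \<Rightarrow> complex" and M m :: nat
  assumes "M > 0"
  shows "(\<Sum>k<M. (\<Sum>n<M. B n * exp (- 2 * pi * \<i> * of_nat n * of_nat k / of_nat M))
            * exp (2 * pi * \<i> * of_nat k * of_nat m / of_nat M))
       = of_nat M * B (m mod M)"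
proof -
  let ?e = "\<lambda>n k. exp (- 2 * pi * \<i> * of_nat n * of_nat k / of_nat M) * exp (2 * pi * \<i> * of_nat k * of_nat m / of_nat M)"
  have phase: "?e n k = exp (2 * pi * \<i> * of_nat k * of_int (int m - int n) / of_nat M)" for n k
    unfolding exp_add[symmetric] using assms by (simp add: field_simps)
  have orthogonality: "(\<Sum>k<M. ?e n k) = (if n = m mod M then of_nat M else 0)" if "n < M" for n
    unfolding phase sum_root_of_unity_powers[OF assms] int_dvd_diff_iff_eq_mod[OF that] ..
  have "(\<Sum>k<M. (\<Sum>n<M. B n * exp (- 2 * pi * \<i> * of_nat n * of_nat k / of_nat M))
            * exp (2 * pi * \<i> * of_nat k * of_nat m / of_nat M)) = (\<Sum>k<M. \<Sum>n<M. B n * ?e n k)"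
    by (simp add: sum_distrib_right mult.assoc)
  also have "\<dots> = (\<Sum>n<M. B n * (\<Sum>k<M. ?e n k))"
    by (subst sum.swap) (simp add: sum_distrib_left)
  also have "\<dots> = (\<Sum>n<M. B n * (if n = m mod M then of_nat M else 0))"
    by (rule sum.cong[OF refl]) (subst orthogonality, auto)
  also have "\<dots> = of_nat M * B (m mod M)"
    using assms by (simp add: if_distrib[of "(*) _"] sum.delta' cong: if_cong)
  finally show ?thesis .
qed

lemma coherent_scaled_root_of_unity:
  fixes \<epsilon> :: real and M k m :: nat
  shows "coherent (complex_of_real \<epsilon> * exp (2 * pi * \<i> * of_nat k / of_nat M)) m =
    complex_of_real (exp (- \<epsilon>\<^sup>2 / 2) * \<epsilon> ^ m / sqrt (fact m)) * exp (2 * pi * \<i> * of_nat k * of_nat m / of_nat M)"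
proof -
  have "cmod (complex_of_real \<epsilon> * exp (2 * pi * \<i> * of_nat k / of_nat M)) = \<bar>\<epsilon>\<bar>"
    by (simp only: norm_mult norm_exp_eq_Re) simp
  moreover have "exp (2 * pi * \<i> * of_nat k / of_nat M) ^ m = exp (2 * pi * \<i> * of_nat k * of_nat m / of_nat M)"
    unfolding exp_of_nat_mult[symmetric] by (simp add: mult_ac)
  ultimately show ?thesis unfolding coherent_def power_mult_distrib by simp
qed

lemma approx_unnorm_eq:
  fixes \<epsilon> :: real and N m :: nat and a :: "nat \<Rightarrow> complex"
  assumes "\<epsilon> \<noteq> 0"
  defines "r \<equiv> m mod (N + 1)"
  shows "approx_unnorm N a \<epsilon> m = complex_of_real (\<epsilon> ^ m / sqrt (fact m) * sqrt (fact r) / \<epsilon> ^ r) * a r"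
proof -
  define M where "M = N + 1"
  define A where "A = complex_of_real (exp (\<epsilon>\<^sup>2 / 2) / real M)"
  define B where "B n = complex_of_real (sqrt (fact n)) * a n / complex_of_real (\<epsilon> ^ n)" for n
  define P where "P = complex_of_real (exp (- \<epsilon>\<^sup>2 / 2) * \<epsilon> ^ m / sqrt (fact m))"
  define S where "S k = (\<Sum>n<M. B n * exp (- 2 * pi * \<i> * of_nat n * of_nat k / of_nat M))" for k
  define e where "e k = exp (2 * pi * \<i> * of_nat k * of_nat m / of_nat M)" for k
  have upto_N: "{..N} = {..<M}" unfolding M_def by auto
  have "coeff_c N a \<epsilon> k = A * S k" for k
    unfolding coeff_c_def A_def B_def S_def M_def upto_N[unfolded M_def] by (simp add: mult_ac)
  moreover have "coherent (complex_of_real \<epsilon> * exp (2 * pi * \<i> * of_nat k / of_nat (N + 1))) m = P * e k" for k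
    unfolding coherent_scaled_root_of_unity P_def e_def M_def ..
  ultimately have "approx_unnorm N a \<epsilon> m = (\<Sum>k<M. A * S k * (P * e k))"
    unfolding approx_unnorm_def upto_N by simp
  also have "\<dots> = A * P * (\<Sum>k<M. S k * e k)"
    by (simp add: sum_distrib_left mult_ac)
  also have "(\<Sum>k<M. S k * e k) = of_nat M * B r"
    unfolding S_def e_def r_def M_def by (rule sum_dft_inverse_aliasing) simp
  also have "A * P * (of_nat M * B r) = complex_of_real (\<epsilon> ^ m / sqrt (fact m) * sqrt (fact r) / \<epsilon> ^ r) * a r"
  proof -
    have "exp (\<epsilon>\<^sup>2 / 2) / real M * real M = exp (\<epsilon>\<^sup>2 / 2)" by (simp add: M_def)
    then have AM: "A * of_nat M = complex_of_real (exp (\<epsilon>\<^sup>2 / 2))"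
      unfolding A_def by (metis of_real_mult of_real_of_nat_eq)
    have EP: "complex_of_real (exp (\<epsilon>\<^sup>2 / 2)) * P = complex_of_real (\<epsilon> ^ m / sqrt (fact m))"
      unfolding P_def of_real_mult[symmetric] by (simp add: exp_minus field_simps)
    have "A * P * (of_nat M * B r) = A * of_nat M * P * B r" by (simp add: mult_ac)
    also have "\<dots> = complex_of_real (\<epsilon> ^ m / sqrt (fact m)) * B r" unfolding AM EP ..
    finally show ?thesis unfolding B_def using assms by (simp add: field_simps)
  qed
  finally show ?thesis .
qed

lemma approx_unnorm_eq_self:
  assumes "\<epsilon> \<noteq> 0" "m \<le> N"
  shows "approx_unnorm N a \<epsilon> m = a m"
  using assms by (simp add: approx_unnorm_eq)

lemma norm_approx_unnorm_square:
  fixes \<epsilon> :: real and N m :: nat and a :: "nat \<Rightarrow> complex"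
  assumes "\<epsilon> \<noteq> 0"
  defines "r \<equiv> m mod (N + 1)"
  shows "(cmod (approx_unnorm N a \<epsilon> m))\<^sup>2 = (\<epsilon>\<^sup>2) ^ m / fact m * (fact r / (\<epsilon>\<^sup>2) ^ r * (cmod (a r))\<^sup>2)"
proof -
  have "(cmod (approx_unnorm N a \<epsilon> m))\<^sup>2 = (\<epsilon> ^ m / sqrt (fact m) * sqrt (fact r) / \<epsilon> ^ r)\<^sup>2 * (cmod (a r))\<^sup>2"
    unfolding approx_unnorm_eq[OF assms(1)] r_def norm_mult norm_of_real power_mult_distrib power2_abs ..
  moreover have "(\<epsilon> ^ k)\<^sup>2 = (\<epsilon>\<^sup>2) ^ k" for k by (metis power_mult mult.commute)
  ultimately show ?thesis by (simp add: power_divide power_mult_distrib)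
qed

lemma fact_mult_fact_diff_le:
  fixes r N m :: nat
  assumes "r \<le> N" "N \<le> m"
  shows "fact r * fact (m - N) \<le> (fact m :: nat)"
proof -
  have "fact r * fact (m - N) \<le> (fact r * fact (m - r) :: nat)"
    using assms by (intro mult_le_mono2 fact_mono) simp
  also have "\<dots> \<le> fact r * fact (m - r) * (m choose r)"
    using assms by (simp add: Suc_le_eq zero_less_binomial_iff)
  also have "\<dots> = fact m"
    using assms by (intro binomial_fact_lemma) simp
  finally show ?thesis .
qed

lemma summable_norm_approx_unnorm_square:
  fixes \<epsilon> :: real
  assumes "\<epsilon> \<noteq> 0"
  shows "(\<lambda>m. (cmod (approx_unnorm N a \<epsilon> m))\<^sup>2) summable_on UNIV"
proof -
  define K where "K = (\<Sum>r\<le>N. fact r / (\<epsilon>\<^sup>2) ^ r * (cmod (a r))\<^sup>2)"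
  have K_nonneg: "0 \<le> K" unfolding K_def by (intro sum_nonneg) auto
  have "summable (\<lambda>m. inverse (fact m) * (\<epsilon>\<^sup>2) ^ m * K)"
    by (intro summable_mult2 summable_exp)
  then have "(\<lambda>m. inverse (fact m) * (\<epsilon>\<^sup>2) ^ m * K) summable_on UNIV"
    using K_nonneg by (subst summable_on_UNIV_nonneg_real_iff) auto
  then show ?thesis
  proof (rule summable_on_comparison_test)
    fix m :: nat
    define r where "r = m mod (N + 1)"
    have "r \<le> N" unfolding r_def using mod_less_divisor[of "N + 1" m] by linarith
    then have "fact r / (\<epsilon>\<^sup>2) ^ r * (cmod (a r))\<^sup>2 \<le> K"
      unfolding K_def by (intro member_le_sum) auto
    then have "(\<epsilon>\<^sup>2) ^ m / fact m * (fact r / (\<epsilon>\<^sup>2) ^ r * (cmod (a r))\<^sup>2) \<le> (\<epsilon>\<^sup>2) ^ m / fact m * K"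
      by (rule mult_left_mono) simp
    then show "(cmod (approx_unnorm N a \<epsilon> m))\<^sup>2 \<le> inverse (fact m) * (\<epsilon>\<^sup>2) ^ m * K"
      unfolding norm_approx_unnorm_square[OF assms] r_def[symmetric] by (simp add: divide_inverse mult_ac)
  qed simp
qed

lemma normN_eq_1_plus_tail:
  fixes \<epsilon> :: real
  assumes "\<epsilon> \<noteq> 0" and normalized: "(\<Sum>n\<le>N. (cmod (a n))\<^sup>2) = 1"
  shows "normN N a \<epsilon> = 1 + (\<Sum>\<^sub>\<infinity>m\<in>{N<..}. (cmod (approx_unnorm N a \<epsilon> m))\<^sup>2)"
proof -
  let ?F = "\<lambda>m. (cmod (approx_unnorm N a \<epsilon> m))\<^sup>2"
  have "(UNIV :: nat set) = {..N} \<union> {N<..}" by auto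
  then have "normN N a \<epsilon> = infsum ?F ({..N} \<union> {N<..})"
    unfolding normN_def sqnorm_def by simp
  also have "\<dots> = infsum ?F {..N} + infsum ?F {N<..}"
    by (intro infsum_Un_disjoint summable_on_subset[OF summable_norm_approx_unnorm_square[OF assms(1)]]) auto
  also have "infsum ?F {..N} = 1"
    using approx_unnorm_eq_self[OF assms(1)] normalized by simp
  finally show ?thesis .
qed

lemma norm_approx_unnorm_square_high_le:
  fixes \<epsilon> :: real
  assumes "\<epsilon> \<noteq> 0" "\<bar>\<epsilon>\<bar> \<le> 1" "N < m" and normalized: "(\<Sum>n\<le>N. (cmod (a n))\<^sup>2) = 1"
  shows "(cmod (approx_unnorm N a \<epsilon> m))\<^sup>2 \<le> \<epsilon> ^ (2 * (N + 1)) / fact (m - N)"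
proof -
  define r where "r = m mod (N + 1)"
  have r_le: "r \<le> N" unfolding r_def using mod_less_divisor[of "N + 1" m] by linarith
  have "m - r = (N + 1) * (m div (N + 1))" unfolding r_def by (simp add: minus_mod_eq_mult_div)
  moreover have "m div (N + 1) \<ge> 1" using assms(3) by (simp add: Suc_le_eq div_greater_zero_iff)
  ultimately have m_r: "N + 1 \<le> m - r" by (metis mult.right_neutral mult_le_mono2)
  have eps2: "0 \<le> \<epsilon>\<^sup>2" "\<epsilon>\<^sup>2 \<le> 1" using assms(2) by (auto simp: abs_square_le_1)
  have a_r: "(cmod (a r))\<^sup>2 \<le> 1"
    using r_le normalized member_le_sum[of r "{..N}" "\<lambda>n. (cmod (a n))\<^sup>2"] by simp
  have "real (fact r * fact (m - N)) \<le> real (fact m)"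
    using fact_mult_fact_diff_le[OF r_le] assms(3) by (simp only: of_nat_le_iff)
  then have fact_quot: "fact r / fact m \<le> (1 / fact (m - N) :: real)"
    by (simp add: field_simps)
  have "(cmod (approx_unnorm N a \<epsilon> m))\<^sup>2 = (\<epsilon>\<^sup>2) ^ m / (\<epsilon>\<^sup>2) ^ r * (fact r / fact m) * (cmod (a r))\<^sup>2"
    unfolding norm_approx_unnorm_square[OF assms(1)] r_def[symmetric] by (simp add: field_simps)
  also have "(\<epsilon>\<^sup>2) ^ m / (\<epsilon>\<^sup>2) ^ r = (\<epsilon>\<^sup>2) ^ (m - r)"
    using assms(1) m_r by (simp add: power_diff)
  also have "(\<epsilon>\<^sup>2) ^ (m - r) * (fact r / fact m) * (cmod (a r))\<^sup>2 \<le> (\<epsilon>\<^sup>2) ^ (N + 1) * (1 / fact (m - N)) * 1"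
  proof (intro mult_mono)
    show "(\<epsilon>\<^sup>2) ^ (m - r) \<le> (\<epsilon>\<^sup>2) ^ (N + 1)" using eps2 m_r by (intro power_decreasing) auto
  qed (use fact_quot a_r eps2 in auto)
  finally show ?thesis unfolding power_mult by simp
qed

lemma normN_le_1_plus_power:
  fixes \<epsilon> :: real
  assumes "\<epsilon> \<noteq> 0" "\<bar>\<epsilon>\<bar> \<le> 1" and normalized: "(\<Sum>n\<le>N. (cmod (a n))\<^sup>2) = 1"
  shows "normN N a \<epsilon> \<le> 1 + \<epsilon> ^ (2 * (N + 1)) * (\<Sum>\<^sub>\<infinity>m\<in>{N<..}. 1 / fact (m - N))"
proof -
  let ?g = "\<lambda>m::nat. 1 / fact (m - N) :: real"
  have "summable (\<lambda>n. ?g (n + N))" using summable_exp[of "1::real"] by (simp add: divide_inverse)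
  then have "summable ?g" by (rule summable_iff_shift[THEN iffD1])
  then have "?g summable_on UNIV" by (subst summable_on_UNIV_nonneg_real_iff) auto
  then have g_summable: "?g summable_on {N<..}" by (rule summable_on_subset) simp
  have "(\<Sum>\<^sub>\<infinity>m\<in>{N<..}. (cmod (approx_unnorm N a \<epsilon> m))\<^sup>2) \<le> (\<Sum>\<^sub>\<infinity>m\<in>{N<..}. \<epsilon> ^ (2 * (N + 1)) * ?g m)"
  proof (rule infsum_mono)
    show "(\<lambda>m. (cmod (approx_unnorm N a \<epsilon> m))\<^sup>2) summable_on {N<..}"
      by (rule summable_on_subset[OF summable_norm_approx_unnorm_square[OF assms(1)]]) simp
    show "(\<lambda>m. \<epsilon> ^ (2 * (N + 1)) * ?g m) summable_on {N<..}"
      by (rule summable_on_cmult_right[OF g_summable])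
    show "(cmod (approx_unnorm N a \<epsilon> m))\<^sup>2 \<le> \<epsilon> ^ (2 * (N + 1)) * ?g m" if "m \<in> {N<..}" for m
      using norm_approx_unnorm_square_high_le[OF assms(1,2) _ normalized] that by simp
  qed
  then show ?thesis
    unfolding normN_eq_1_plus_tail[OF assms(1) normalized] infsum_cmult_right' by simp
qed

lemma one_le_normN:
  fixes \<epsilon> :: real
  assumes "\<epsilon> \<noteq> 0" and normalized: "(\<Sum>n\<le>N. (cmod (a n))\<^sup>2) = 1"
  shows "1 \<le> normN N a \<epsilon>"
  unfolding normN_eq_1_plus_tail[OF assms] by (simp add: infsum_nonneg)

lemma eventually_at_0_small_nonzero: "\<forall>\<^sub>F \<epsilon> in at (0::real). \<epsilon> \<noteq> 0 \<and> \<bar>\<epsilon>\<bar> \<le> 1"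
  unfolding eventually_at by (intro exI[of _ 1]) auto

lemma normN_minus_1_bigo:
  assumes normalized: "(\<Sum>n\<le>N. (cmod (a n))\<^sup>2) = 1"
  shows "(\<lambda>\<epsilon>. normN N a \<epsilon> - 1) \<in> O[at 0](\<lambda>\<epsilon>. \<epsilon> ^ (2 * (N + 1)) / fact (N + 1))"
proof (rule bigoI)
  define G where "G = (\<Sum>\<^sub>\<infinity>m\<in>{N<..}. 1 / fact (m - N) :: real)"
  show "\<forall>\<^sub>F \<epsilon> in at 0. norm (normN N a \<epsilon> - 1) \<le> G * fact (N + 1) * norm (\<epsilon> ^ (2 * (N + 1)) / fact (N + 1))"
    using eventually_at_0_small_nonzero
  proof eventually_elim
    case (elim \<epsilon>)
    then have "norm (normN N a \<epsilon> - 1) \<le> \<epsilon> ^ (2 * (N + 1)) * G"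
      using normN_le_1_plus_power[OF _ _ normalized] one_le_normN[OF _ normalized] unfolding G_def by force
    moreover have "norm (\<epsilon> ^ (2 * (N + 1)) / fact (N + 1)) = \<epsilon> ^ (2 * (N + 1)) / fact (N + 1)"
      unfolding power_mult norm_divide real_norm_def power_abs[symmetric] by simp
    moreover have "\<epsilon> ^ (2 * (N + 1)) * G = G * fact (N + 1) * (\<epsilon> ^ (2 * (N + 1)) / fact (N + 1))"
      by simp
    ultimately show ?case by (simp only:)
  qed
qed

lemma normN_tendsto_1:
  assumes normalized: "(\<Sum>n\<le>N. (cmod (a n))\<^sup>2) = 1"
  shows "((\<lambda>\<epsilon>. normN N a \<epsilon>) \<longlongrightarrow> 1) (at 0)"
proof (rule tendsto_sandwich)
  define G where "G = (\<Sum>\<^sub>\<infinity>m\<in>{N<..}. 1 / fact (m - N) :: real)"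
  show "\<forall>\<^sub>F \<epsilon> in at 0. 1 \<le> normN N a \<epsilon>"
    using eventually_at_0_small_nonzero by eventually_elim (use one_le_normN normalized in simp)
  show "\<forall>\<^sub>F \<epsilon> in at 0. normN N a \<epsilon> \<le> 1 + \<epsilon> ^ (2 * (N + 1)) * G"
    using eventually_at_0_small_nonzero by eventually_elim (use normN_le_1_plus_power normalized G_def in simp)
  have "((\<lambda>\<epsilon>::real. 1 + \<epsilon> ^ (2 * (N + 1)) * G) \<longlongrightarrow> 1 + 0 ^ (2 * (N + 1)) * G) (at 0)"
    by (intro tendsto_intros)
  then show "((\<lambda>\<epsilon>::real. 1 + \<epsilon> ^ (2 * (N + 1)) * G) \<longlongrightarrow> 1) (at 0)" by simp
qed simp

lemma fidelity_approx_state: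
  fixes \<epsilon> :: real
  assumes supp: "\<And>n. n > N \<Longrightarrow> a n = 0"
    and normalized: "(\<Sum>n\<le>N. (cmod (a n))\<^sup>2) = 1"
    and "\<epsilon> \<noteq> 0"
  shows "fidelity a (approx_state N a \<epsilon>) = 1 / normN N a \<epsilon>"
proof -
  define s where "s = sqrt (normN N a \<epsilon>)"
  have s_pos: "s > 0"
    unfolding s_def using one_le_normN[OF assms(3) normalized] by simp
  have "braket a (approx_state N a \<epsilon>) = (\<Sum>\<^sub>\<infinity>n. cnj (a n) * (approx_unnorm N a \<epsilon> n / complex_of_real s))"
    unfolding braket_def approx_state_def s_def ..
  also have "\<dots> = (\<Sum>n\<le>N. cnj (a n) * (a n / complex_of_real s))"
    by (subst infsum_cong_neutral[where T = "{..N}"])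
       (use supp approx_unnorm_eq_self[OF assms(3)] in \<open>auto simp: not_le\<close>)
  also have "\<dots> = (\<Sum>n\<le>N. complex_of_real ((cmod (a n))\<^sup>2)) / complex_of_real s"
    unfolding sum_divide_distrib
    by (intro sum.cong refl) (metis complex_norm_square mult.commute times_divide_eq_right)
  also have "\<dots> = complex_of_real (1 / s)"
    unfolding of_real_sum[symmetric] normalized by simp
  finally have "fidelity a (approx_state N a \<epsilon>) = (1 / s)\<^sup>2"
    unfolding fidelity_def using s_pos by (simp add: norm_divide)
  also have "\<dots> = 1 / normN N a \<epsilon>"
    unfolding s_def using one_le_normN[OF assms(3) normalized] by (simp add: power_divide)
  finally show ?thesis .
qed

lemma has_coherent_rank_approx_state: "has_coherent_rank (N + 1) (approx_state N a \<epsilon>)"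
  unfolding has_coherent_rank_def
proof (intro exI ext)
  fix m
  have "{..<N + 1} = {..N}" by auto
  then show "approx_state N a \<epsilon> m = (\<Sum>i<N + 1. (coeff_c N a \<epsilon> i / complex_of_real (sqrt (normN N a \<epsilon>))) *
      coherent (complex_of_real \<epsilon> * exp (2 * pi * \<i> * of_nat i / of_nat (N + 1))) m)"
    unfolding approx_state_def approx_unnorm_def sum_divide_distrib by (simp add: field_simps)
qed

lemma is_state_approx_state:
  fixes \<epsilon> :: real
  assumes "\<epsilon> \<noteq> 0" and normalized: "(\<Sum>n\<le>N. (cmod (a n))\<^sup>2) = 1"
  shows "is_state (approx_state N a \<epsilon>)"
proof -
  let ?F = "\<lambda>m. (cmod (approx_unnorm N a \<epsilon> m))\<^sup>2"
  have normN_pos: "normN N a \<epsilon> > 0" using one_le_normN[OF assms] by simp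
  have square_eq: "(cmod (approx_state N a \<epsilon> m))\<^sup>2 = ?F m * inverse (normN N a \<epsilon>)" for m
    unfolding approx_state_def norm_divide norm_of_real power_divide using normN_pos by (simp add: divide_inverse)
  have "(\<lambda>m. ?F m * inverse (normN N a \<epsilon>)) summable_on UNIV"
    by (intro summable_on_cmult_left summable_norm_approx_unnorm_square assms(1))
  moreover have "(\<Sum>\<^sub>\<infinity>m. ?F m * inverse (normN N a \<epsilon>)) = 1"
    unfolding infsum_cmult_left' using normN_pos by (simp add: normN_def sqnorm_def)
  ultimately show ?thesis
    unfolding is_state_def sqnorm_def square_eq by simp
qed

lemma approx_coherent_rank_le_if_fidelity_tendsto_1:
  assumes "F \<noteq> bot"
    and "\<forall>\<^sub>F x in F. has_coherent_rank k (\<phi> x) \<and> is_state (\<phi> x)"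
    and "((\<lambda>x. fidelity \<psi> (\<phi> x)) \<longlongrightarrow> 1) F"
  shows "approx_coherent_rank \<psi> \<le> k"
  unfolding approx_coherent_rank_def
proof (rule Least_le, intro allI impI)
  fix \<delta> :: real
  assume "\<delta> > 0"
  then have "\<forall>\<^sub>F x in F. fidelity \<psi> (\<phi> x) > 1 - \<delta>"
    using order_tendstoD(1)[OF assms(3)] by simp
  with assms(2) have "\<forall>\<^sub>F x in F. has_coherent_rank k (\<phi> x) \<and> is_state (\<phi> x) \<and> fidelity \<psi> (\<phi> x) > 1 - \<delta>"
    by eventually_elim simp
  then show "\<exists>\<phi>. has_coherent_rank k \<phi> \<and> is_state \<phi> \<and> fidelity \<psi> \<phi> > 1 - \<delta>"
    using eventually_happens'[OF assms(1)] by blast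
qed

theorem theorem1:
  fixes N :: nat and a :: "nat \<Rightarrow> complex"
  assumes supp: "\<And>n. n > N \<Longrightarrow> a n = 0"
    and normalized: "(\<Sum>n\<le>N. (cmod (a n))\<^sup>2) = 1"
  shows "approx_coherent_rank a \<le> N + 1
    \<and> (\<lambda>\<epsilon>. normN N a \<epsilon> - 1) \<in> O[at 0](\<lambda>\<epsilon>. \<epsilon> ^ (2 * (N + 1)) / fact (N + 1))
    \<and> (\<forall>\<epsilon>. \<epsilon> \<noteq> 0 \<longrightarrow> fidelity a (approx_state N a \<epsilon>) = 1 / normN N a \<epsilon>)
    \<and> ((\<lambda>\<epsilon>. fidelity a (approx_state N a \<epsilon>)) \<longlongrightarrow> 1) (at 0)"
proof -
  have fidelity: "\<forall>\<epsilon>. \<epsilon> \<noteq> 0 \<longrightarrow> fidelity a (approx_state N a \<epsilon>) = 1 / normN N a \<epsilon>"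
    using fidelity_approx_state[OF supp normalized] by blast
  have nonzero: "\<forall>\<^sub>F \<epsilon> in at (0::real). \<epsilon> \<noteq> 0"
    by (simp add: eventually_at_filter)
  have "((\<lambda>\<epsilon>. 1 / normN N a \<epsilon>) \<longlongrightarrow> 1 / 1) (at 0)"
    by (intro tendsto_divide tendsto_const normN_tendsto_1[OF normalized]) simp
  moreover have "\<forall>\<^sub>F \<epsilon> in at 0. 1 / normN N a \<epsilon> = fidelity a (approx_state N a \<epsilon>)"
    using nonzero by eventually_elim (simp add: fidelity)
  ultimately have fidelity_lim: "((\<lambda>\<epsilon>. fidelity a (approx_state N a \<epsilon>)) \<longlongrightarrow> 1) (at 0)"
    by (simp add: tendsto_cong)
  have "\<forall>\<^sub>F \<epsilon> in at 0. has_coherent_rank (N + 1) (approx_state N a \<epsilon>) \<and> is_state (approx_state N a \<epsilon>)"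
    using nonzero by eventually_elim (blast intro: has_coherent_rank_approx_state is_state_approx_state[OF _ normalized])
  then have "approx_coherent_rank a \<le> N + 1"
    by (rule approx_coherent_rank_le_if_fidelity_tendsto_1[OF at_neq_bot _ fidelity_lim])
  then show ?thesis
    using normN_minus_1_bigo[OF normalized] fidelity fidelity_lim by blast
qed

end
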